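(* For any $w \in \{b,\beta\}^*$ such that $\varphi_w$ is primitive, the set $C(w) = \{\varphi_v : v = \mathrm{cyc}^k(w),\ k\in\mathbb{N}\}$ is closed under derivation.
   Context: Morphisms on $\{0,1\}^*$: $\varphi_b: 0 \mapsto 0, 1\mapsto 01$; $\varphi_\beta: 0\mapsto 10, 1 \mapsto 1$ (also $\varphi_a: 0\mapsto 0,1\mapsto 10$, $\varphi_\alpha: 0\mapsto 01, 1\mapsto 1$); for $w=w_0\cdots w_{m-1}$, $\varphi_w = \varphi_{w_0}\circ\cdots\circ\varphi_{w_{m-1}}$. For a word $u = u_0u_1\cdots u_{n-1}$, $\mathrm{cyc}(u) = u_1\cdots u_{n-1}u_0$. A morphism is primitive if some power maps every letter to a word containing every letter; a substitution is a morphism $\psi$ with a letter $c$ such that $\psi(c)=cx$, $x$ nonempty, $|\psi^n(c)|\to\infty$. Derived word: for a uniformly recurrent word $\mathbf{u}$ and a factor $v$, a return word of $v$ is a factor $r$ such that $rv$ is a factor in which $v$ occurs exactly twice (as prefix and suffix); if $r_0,\dots,r_k$ are all return words, write $\mathbf{u}=p\,r_{s_0}r_{s_1}\cdots$ with $|p|$ the first occurrence of $v$; $\mathbf{d}_{\mathbf{u}}(v)=s_0s_1\cdots$, up to permutation of letters. A finite set $M$ of primitive substitutions is closed under derivation if for every $\varphi\in M$, every fixed point $\mathbf{u}$ of $\varphi$ and every factor $v$ of $\mathbf{u}$, $\mathbf{d}_{\mathbf{u}}(v)$ is fixed by some $\psi\in M$. *)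

theory Defs
  imports Main
begin

text \<open>Letters are natural numbers; the binary alphabet is {0,1}.  A morphism on
  {0,1}* is represented by its letter images (only the values at 0 and 1 matter).
  Infinite words are functions nat => nat.\<close>

type_synonym morph = "nat \<Rightarrow> nat list"

definition ext :: "morph \<Rightarrow> nat list \<Rightarrow> nat list" where
  "ext f xs = concat (map f xs)"

definition mcomp :: "morph \<Rightarrow> morph \<Rightarrow> morph" where
  "mcomp f g = (\<lambda>c. ext f (g c))"

definition mid :: morph where
  "mid = (\<lambda>c. [c])"

fun mpow :: "morph \<Rightarrow> nat \<Rightarrow> morph" where
  "mpow f 0 = mid"
| "mpow f (Suc n) = mcomp f (mpow f n)"

datatype gen = Ga | Gb | Galpha | Gbeta

fun gen_morph :: "gen \<Rightarrow> morph" where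
  "gen_morph Gb = (\<lambda>c. if c = 0 then [0] else [0,1])"
| "gen_morph Gbeta = (\<lambda>c. if c = 0 then [1,0] else [1])"
| "gen_morph Ga = (\<lambda>c. if c = 0 then [0] else [1,0])"
| "gen_morph Galpha = (\<lambda>c. if c = 0 then [0,1] else [1])"

fun phi :: "gen list \<Rightarrow> morph" where
  "phi [] = mid"
| "phi (x # xs) = mcomp (gen_morph x) (phi xs)"

definition primitive :: "morph \<Rightarrow> bool" where
  "primitive f \<longleftrightarrow> (\<exists>n. \<forall>a<2. \<forall>b<2. b \<in> set (mpow f n a))"

definition substitution :: "morph \<Rightarrow> bool" where
  "substitution f \<longleftrightarrow> (\<exists>c<2. \<exists>x. x \<noteq> [] \<and> f c = c # x \<and>
      filterlim (\<lambda>n. length (mpow f n c)) at_top sequentially)"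

text \<open>u is a fixed point of f: u is an infinite word over {0,1} with f(u) = u,
  i.e. the images of prefixes of u are prefixes of u and their lengths are unbounded.\<close>
definition fixed_point :: "morph \<Rightarrow> (nat \<Rightarrow> nat) \<Rightarrow> bool" where
  "fixed_point f u \<longleftrightarrow> (\<forall>i. u i < 2) \<and>
     (\<forall>n. ext f (map u [0..<n]) = map u [0..<length (ext f (map u [0..<n]))]) \<and>
     (\<forall>N. \<exists>n. N < length (ext f (map u [0..<n])))"

definition occurs_at :: "(nat \<Rightarrow> nat) \<Rightarrow> nat list \<Rightarrow> nat \<Rightarrow> bool" where
  "occurs_at u v i \<longleftrightarrow> map u [i..<i + length v] = v"

definition factor :: "nat list \<Rightarrow> (nat \<Rightarrow> nat) \<Rightarrow> bool" where
  "factor v u \<longleftrightarrow> (\<exists>i. occurs_at u v i)"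

definition occ_count :: "nat list \<Rightarrow> nat list \<Rightarrow> nat" where
  "occ_count v x = card {i. i + length v \<le> length x \<and> take (length v) (drop i x) = v}"

definition return_word :: "(nat \<Rightarrow> nat) \<Rightarrow> nat list \<Rightarrow> nat list \<Rightarrow> bool" where
  "return_word u v r \<longleftrightarrow> factor (r @ v) u \<and> take (length v) (r @ v) = v
      \<and> occ_count v (r @ v) = 2"

text \<open>s is a derived word d_u(v) (up to permutation of letters): for some
  enumeration rs = r_0,...,r_k of all return words of v,
  u = p r_{s_0} r_{s_1} ... with |p| the first occurrence of v.\<close>
definition derived :: "(nat \<Rightarrow> nat) \<Rightarrow> nat list \<Rightarrow> (nat \<Rightarrow> nat) \<Rightarrow> bool" where
  "derived u v s \<longleftrightarrow> (\<exists>rs. distinct rs \<and> set rs = {r. return_word u v r} \<and>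
      (\<forall>j. s j < length rs) \<and>
      (let p = (LEAST i. occurs_at u v i) in
        \<forall>n. map u [p..<p + length (concat (map (\<lambda>j. rs ! s j) [0..<n]))]
             = concat (map (\<lambda>j. rs ! s j) [0..<n])))"

definition closed_under_derivation :: "morph set \<Rightarrow> bool" where
  "closed_under_derivation M \<longleftrightarrow> finite M \<and>
     (\<forall>f\<in>M. primitive f \<and> substitution f) \<and>
     (\<forall>f\<in>M. \<forall>u. fixed_point f u \<longrightarrow> (\<forall>v. factor v u \<longrightarrow>
        (\<exists>s. derived u v s \<and> (\<exists>g\<in>M. fixed_point g s))))"

end

theory Submission
  imports Defs
begin

text \<open>Let a rotation of w be g z, and let a be the letter that begins every \<open>\<phi>\<^sub>g\<close>-image
  (a = 0 for b, a = 1 for \<open>\<beta>\<close>).  A fixed point u of \<open>\<phi>\<^sub>g\<^sub>z\<close> is \<open>\<phi>\<^sub>g(y)\<close> for the fixed point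
  \<open>y = \<phi>\<^sub>z(u)\<close> of \<open>\<phi>\<^sub>z\<^sub>g\<close>, the next rotation.  In u the letters a mark where the
  \<open>\<phi>\<^sub>g\<close>-blocks start, so the occurrences of a factor v of u correspond to those of a factor of
  y, its ancestor, and the return words of v are the images of those of the ancestor: both have
  the same derived word.  The ancestor is shorter than v unless v is the letter 1 - a; that case
  is settled by rotating further until the first generator has head letter 1 - a.  So by
  induction on |v| the derived word of v is the derived word of the empty word in a fixed point
  of some rotation, i.e. that fixed point itself, and there are always exactly two return
  words.\<close>

section \<open>Morphisms and images of infinite words\<close>

lemma ext_Nil [simp]: "ext f [] = []"
  by (simp add: ext_def)

lemma ext_Cons [simp]: "ext f (c # xs) = f c @ ext f xs"
  by (simp add: ext_def)

lemma ext_append [simp]: "ext f (xs @ ys) = ext f xs @ ext f ys"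
  by (simp add: ext_def)

lemma set_ext: "set (ext f xs) = (\<Union>c\<in>set xs. set (f c))"
  by (auto simp: ext_def)

lemma ext_mid [simp]: "ext mid xs = xs"
  by (induction xs) (simp_all add: mid_def)

lemma ext_mcomp: "ext (mcomp f g) xs = ext f (ext g xs)"
  by (induction xs) (simp_all add: mcomp_def)

lemma mcomp_assoc: "mcomp (mcomp f g) h = mcomp f (mcomp g h)"
  by (rule ext) (simp add: mcomp_def ext_mcomp[unfolded mcomp_def])

lemma mcomp_mid_left [simp]: "mcomp mid f = f"
  by (simp add: mcomp_def)

lemma mcomp_mid_right [simp]: "mcomp f mid = f"
  by (simp add: mcomp_def mid_def)

lemma phi_snoc: "phi (xs @ [g]) = mcomp (phi xs) (gen_morph g)"
  by (induction xs) (simp_all add: mcomp_assoc)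

definition nonerasing :: "morph \<Rightarrow> bool" where
  "nonerasing f \<longleftrightarrow> (\<forall>c. f c \<noteq> [])"

lemma length_le_length_ext: "nonerasing f \<Longrightarrow> length xs \<le> length (ext f xs)"
proof (induction xs)
  case (Cons c xs)
  then show ?case by (cases "f c") (auto simp: nonerasing_def)
qed simp

lemma nonerasing_mid: "nonerasing mid"
  by (simp add: nonerasing_def mid_def)

lemma nonerasing_mcomp: "nonerasing f \<Longrightarrow> nonerasing g \<Longrightarrow> nonerasing (mcomp f g)"
  unfolding nonerasing_def mcomp_def by (metis ext_Cons append_is_Nil_conv neq_Nil_conv)

lemma nonerasing_gen_morph: "nonerasing (gen_morph g)"
  by (cases g) (simp_all add: nonerasing_def)

lemma nonerasing_phi: "nonerasing (phi w)"
  by (induction w) (simp_all add: nonerasing_mid nonerasing_mcomp nonerasing_gen_morph)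

lemma map_upt_split: "i \<le> j \<Longrightarrow> j \<le> k \<Longrightarrow> map u [i..<k] = map u [i..<j] @ map u [j..<k]"
  using upt_add_eq_append[of i j "k - j"] by simp

text \<open>The infinite word f(u): for nonerasing f, its i-th letter already lies in the image of the
  prefix of u of length i + 1.\<close>
definition morph_image :: "morph \<Rightarrow> (nat \<Rightarrow> nat) \<Rightarrow> nat \<Rightarrow> nat" where
  "morph_image f u i = ext f (map u [0..<Suc i]) ! i"

lemma nth_ext_prefix:
  assumes "m \<le> n" and "i < length (ext f (map u [0..<m]))"
  shows "ext f (map u [0..<n]) ! i = ext f (map u [0..<m]) ! i"
  using assms by (simp add: map_upt_split[of 0 m n] nth_append)

lemma morph_image_prefix:
  assumes "nonerasing f"
  shows "map (morph_image f u) [0..<length (ext f (map u [0..<n]))] = ext f (map u [0..<n])"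
proof (rule nth_equalityI)
  fix i
  assume "i < length (map (morph_image f u) [0..<length (ext f (map u [0..<n]))])"
  then have i: "i < length (ext f (map u [0..<n]))" by simp
  have "i < length (ext f (map u [0..<Suc i]))"
    using length_le_length_ext[OF assms, of "map u [0..<Suc i]"] by simp
  then have "ext f (map u [0..<Suc i]) ! i = ext f (map u [0..<n]) ! i"
    using i nth_ext_prefix by (metis nat_le_linear)
  then show "map (morph_image f u) [0..<length (ext f (map u [0..<n]))] ! i = ext f (map u [0..<n]) ! i"
    using i by (simp add: morph_image_def)
qed simp

lemma morph_image_unique:
  assumes "nonerasing f"
    and "\<And>n. map x [0..<length (ext f (map u [0..<n]))] = ext f (map u [0..<n])"
  shows "x = morph_image f u"
proof
  fix i
  define L where "L = length (ext f (map u [0..<Suc i]))"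
  have "Suc i \<le> L"
    unfolding L_def using length_le_length_ext[OF assms(1), of "map u [0..<Suc i]"] by simp
  moreover have "map x [0..<L] = map (morph_image f u) [0..<L]"
    unfolding L_def using assms(2) morph_image_prefix[OF assms(1)] by metis
  ultimately show "x i = morph_image f u i" by simp
qed

lemma fixed_point_iff_morph_image:
  assumes "nonerasing f"
  shows "fixed_point f u \<longleftrightarrow> (\<forall>i. u i < 2) \<and> morph_image f u = u"
proof
  assume "fixed_point f u"
  then show "(\<forall>i. u i < 2) \<and> morph_image f u = u"
    using morph_image_unique[OF assms, of u u] unfolding fixed_point_def by simp
next
  assume "(\<forall>i. u i < 2) \<and> morph_image f u = u"
  moreover have "N < length (ext f (map u [0..<Suc N]))" for N
    using length_le_length_ext[OF assms, of "map u [0..<Suc N]"] by simp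
  ultimately show "fixed_point f u"
    using morph_image_prefix[OF assms, of u] unfolding fixed_point_def by metis
qed

lemma morph_image_mcomp:
  assumes f: "nonerasing f" and g: "nonerasing g"
  shows "morph_image (mcomp f g) u = morph_image f (morph_image g u)"
proof (rule sym, rule morph_image_unique[OF nonerasing_mcomp[OF f g]])
  fix n
  have "ext (mcomp f g) (map u [0..<n])
      = ext f (map (morph_image g u) [0..<length (ext g (map u [0..<n]))])"
    by (simp add: ext_mcomp morph_image_prefix[OF g])
  then show "map (morph_image f (morph_image g u)) [0..<length (ext (mcomp f g) (map u [0..<n]))]
      = ext (mcomp f g) (map u [0..<n])"
    using morph_image_prefix[OF f] by simp
qed

lemma morph_image_binary:
  assumes "nonerasing f" and "\<And>c. c < 2 \<Longrightarrow> \<forall>x\<in>set (f c). x < 2" and "\<And>i. u i < 2"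
  shows "morph_image f u i < 2"
proof -
  have "i < length (ext f (map u [0..<Suc i]))"
    using length_le_length_ext[OF assms(1), of "map u [0..<Suc i]"] by simp
  then have "morph_image f u i \<in> set (ext f (map u [0..<Suc i]))"
    unfolding morph_image_def by (rule nth_mem)
  then show ?thesis using assms(2,3) by (auto simp: set_ext)
qed

section \<open>Occurrences, return words and derived words\<close>

lemma occurs_at_Nil [simp]: "occurs_at u [] i"
  by (simp add: occurs_at_def)

lemma occurs_at_Cons: "occurs_at u (c # v) i \<longleftrightarrow> u i = c \<and> occurs_at u v (Suc i)"
  unfolding occurs_at_def by (simp del: upt_Suc add: upt_conv_Cons)

lemma occurs_at_append:
  "occurs_at u (r @ v) i \<longleftrightarrow> occurs_at u r i \<and> occurs_at u v (i + length r)"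
proof -
  have "map u [i..<i + length (r @ v)]
      = map u [i..<i + length r] @ map u [i + length r..<i + length r + length v]"
    using upt_add_eq_append[of i "i + length r" "length v"] by (simp add: add.assoc)
  then show ?thesis unfolding occurs_at_def by (simp add: append_eq_append_conv)
qed

lemma occurs_at_hd: "occurs_at u v i \<Longrightarrow> v \<noteq> [] \<Longrightarrow> u i = hd v"
  by (metis list.exhaust_sel occurs_at_Cons)

lemma occurs_at_segment: "i \<le> j \<Longrightarrow> occurs_at u (map u [i..<j]) i"
  by (simp add: occurs_at_def)

lemma occurs_at_inner_iff:
  assumes "occurs_at u w i0" and "i + length v \<le> length w"
  shows "take (length v) (drop i w) = v \<longleftrightarrow> occurs_at u v (i0 + i)"
proof -
  define L where "L = length w"
  have w: "w = map u [i0..<i0 + L]" using assms(1) by (simp add: occurs_at_def L_def)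
  have "i + length v \<le> L" using assms(2) by (simp add: L_def)
  then have "take (length v) (drop i w) = map u [i0 + i..<i0 + i + length v]"
    unfolding w by (simp add: drop_map take_map take_upt)
  then show ?thesis by (auto simp: occurs_at_def)
qed

lemma occ_count_eq_card_occurrences:
  assumes "occurs_at u (r @ v) i0"
  shows "occ_count v (r @ v) = card {i. i \<le> length r \<and> occurs_at u v (i0 + i)}"
  unfolding occ_count_def
proof (intro arg_cong[where f = card] Collect_cong)
  fix i
  show "i + length v \<le> length (r @ v) \<and> take (length v) (drop i (r @ v)) = v
      \<longleftrightarrow> i \<le> length r \<and> occurs_at u v (i0 + i)"
    using occurs_at_inner_iff[OF assms, of i v] by auto
qed

lemma factor_binary:
  assumes "fixed_point f u" and "factor v u" and "c \<in> set v"
  shows "c < 2"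
proof -
  obtain i where "map u [i..<i + length v] = v"
    using assms(2) unfolding factor_def occurs_at_def by blast
  then have "c \<in> u ` {i..<i + length v}" using assms(3) by (metis set_map set_upt)
  then obtain j where "c = u j" by blast
  then show ?thesis using assms(1) unfolding fixed_point_def by blast
qed

definition enumerates_occurrences :: "(nat \<Rightarrow> nat) \<Rightarrow> nat list \<Rightarrow> (nat \<Rightarrow> nat) \<Rightarrow> bool" where
  "enumerates_occurrences u v oc \<longleftrightarrow> strict_mono oc \<and> range oc = {i. occurs_at u v i}"

lemma enumerates_occurrences_between:
  assumes "enumerates_occurrences u v oc" and "oc k < i" and "i < oc (Suc k)"
  shows "\<not> occurs_at u v i"
proof
  assume "occurs_at u v i"
  then obtain m where "i = oc m" using assms(1) unfolding enumerates_occurrences_def by blast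
  moreover have "strict_mono oc" using assms(1) unfolding enumerates_occurrences_def by blast
  ultimately have "k < m" and "m < Suc k"
    using assms(2,3) by (simp_all add: strict_mono_less)
  then show False by simp
qed

lemma return_word_segment:
  assumes enum: "enumerates_occurrences u v oc"
  shows "return_word u v (map u [oc k..<oc (Suc k)])"
proof -
  let ?r = "map u [oc k..<oc (Suc k)]"
  have lt: "oc k < oc (Suc k)"
    using enum by (simp add: enumerates_occurrences_def strict_mono_Suc_iff)
  have occ: "occurs_at u v (oc j)" for j
    using enum unfolding enumerates_occurrences_def by blast
  have rv: "occurs_at u (?r @ v) (oc k)"
    using occurs_at_segment[of "oc k" "oc (Suc k)" u] occ[of "Suc k"] lt
    by (simp add: occurs_at_append)
  have "take (length v) (?r @ v) = v"
    using occurs_at_inner_iff[OF rv, of 0 v] occ[of k] by simp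
  moreover have "{i. i \<le> length ?r \<and> occurs_at u v (oc k + i)} = {0, length ?r}"
  proof (intro set_eqI iffI)
    fix i
    assume i: "i \<in> {i. i \<le> length ?r \<and> occurs_at u v (oc k + i)}"
    show "i \<in> {0, length ?r}"
    proof (rule ccontr)
      assume "i \<notin> {0, length ?r}"
      then have "oc k < oc k + i" and "oc k + i < oc (Suc k)" using i by auto
      then show False using enumerates_occurrences_between[OF enum] i by blast
    qed
  qed (use occ lt in auto)
  then have "occ_count v (?r @ v) = 2"
    using occ_count_eq_card_occurrences[OF rv] lt by simp
  ultimately show ?thesis unfolding return_word_def factor_def using rv by blast
qed

lemma return_word_obtain_segment:
  assumes enum: "enumerates_occurrences u v oc" and ret: "return_word u v r"
  obtains k where "r = map u [oc k..<oc (Suc k)]"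
proof -
  have mono: "strict_mono oc" and occ: "\<And>i. occurs_at u v i \<longleftrightarrow> i \<in> range oc"
    using enum unfolding enumerates_occurrences_def by auto
  obtain i0 where rv: "occurs_at u (r @ v) i0"
    using ret unfolding return_word_def factor_def by blast
  define S where "S = {i. i \<le> length r \<and> occurs_at u v (i0 + i)}"
  have "card S = 2"
    using ret occ_count_eq_card_occurrences[OF rv] unfolding return_word_def S_def by simp
  moreover have "0 \<in> S"
    using ret occurs_at_inner_iff[OF rv, of 0 v] unfolding return_word_def S_def by simp
  moreover have "length r \<in> S"
    using rv by (simp add: occurs_at_append S_def)
  moreover have "S \<subseteq> {..length r}" by (auto simp: S_def)
  ultimately have r: "r \<noteq> []" and S: "S = {0, length r}"
    by (auto simp: card_2_iff)
  obtain k where k: "i0 = oc k" using occ \<open>0 \<in> S\<close> unfolding S_def by auto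
  obtain m where m: "i0 + length r = oc m" using occ \<open>length r \<in> S\<close> unfolding S_def by auto
  have "oc k < oc m" using k m r by (metis length_greater_0_conv less_add_same_cancel1)
  then have "k < m" using mono by (simp add: strict_mono_less)
  then have "oc (Suc k) \<le> i0 + length r" using m mono by (simp add: Suc_le_eq strict_mono_less_eq)
  moreover have "oc k < oc (Suc k)" using mono by (simp add: strict_mono_Suc_iff)
  ultimately have "oc (Suc k) - i0 \<in> S" using k occ unfolding S_def by auto
  then have "oc (Suc k) = i0 + length r" using S k \<open>oc k < oc (Suc k)\<close> by auto
  moreover have "occurs_at u r i0" using rv by (simp only: occurs_at_append)
  ultimately show ?thesis using k by (intro that[of k]) (simp add: occurs_at_def)
qed

lemma return_words_eq:
  fixes s :: "nat \<Rightarrow> nat"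
  assumes enum: "enumerates_occurrences u v oc"
    and seg: "\<And>k. map u [oc k..<oc (Suc k)] = R (s k)"
    and "\<And>k. s k < 2" and "0 \<in> range s" and "1 \<in> range s"
  shows "{r. return_word u v r} = {R 0, R 1}"
proof (intro set_eqI iffI)
  fix r
  assume "r \<in> {r. return_word u v r}"
  then obtain k where "r = R (s k)"
    using return_word_obtain_segment[OF enum] seg by (metis mem_Collect_eq)
  then show "r \<in> {R 0, R 1}" using assms(3)[of k] by (auto simp: less_2_cases_iff)
next
  fix r
  assume "r \<in> {R 0, R 1}"
  then obtain k where "r = R (s k)" using assms(4,5) by (metis empty_iff insert_iff rangeE)
  then show "r \<in> {r. return_word u v r}" using return_word_segment[OF enum, of k] seg by simp
qed

text \<open>Since s takes both values, R 0 and R 1 are exactly the return words of v, and s is the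
  derived word of v.\<close>
definition derived_by :: "(nat \<Rightarrow> nat) \<Rightarrow> nat list \<Rightarrow> morph \<Rightarrow> bool" where
  "derived_by u v g \<longleftrightarrow> (\<exists>oc R s. enumerates_occurrences u v oc \<and>
     (\<forall>k. map u [oc k..<oc (Suc k)] = R (s k)) \<and> R 0 \<noteq> R 1 \<and>
     fixed_point g s \<and> 0 \<in> range s \<and> 1 \<in> range s)"

lemma derived_by_imp_derived:
  assumes "derived_by u v g"
  obtains s where "derived u v s" and "fixed_point g s"
proof -
  obtain oc R s where enum: "enumerates_occurrences u v oc"
    and seg: "\<And>k. map u [oc k..<oc (Suc k)] = R (s k)" and "R 0 \<noteq> R 1"
    and fp: "fixed_point g s" and s01: "0 \<in> range s" "1 \<in> range s"
    using assms unfolding derived_by_def by blast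
  have mono: "strict_mono oc" and occ: "\<And>i. occurs_at u v i \<longleftrightarrow> i \<in> range oc"
    using enum unfolding enumerates_occurrences_def by auto
  have s2: "s k < 2" for k using fp unfolding fixed_point_def by blast
  define rs where "rs = [R 0, R 1]"
  have rs_s: "rs ! s k = R (s k)" for k
    using s2[of k] by (auto simp: rs_def less_2_cases_iff)
  have "set rs = {r. return_word u v r}"
    using return_words_eq[OF enum seg s2 s01] by (simp add: rs_def)
  moreover have "distinct rs" and "\<forall>j. s j < length rs"
    using \<open>R 0 \<noteq> R 1\<close> s2 by (simp_all add: rs_def numeral_2_eq_2)
  moreover have "(LEAST i. occurs_at u v i) = oc 0"
    using occ mono by (intro Least_equality) (auto simp: strict_mono_less_eq)
  moreover have "concat (map (\<lambda>j. rs ! s j) [0..<n]) = map u [oc 0..<oc n]" for n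
  proof (induction n)
    case (Suc n)
    have "oc 0 \<le> oc n" and "oc n \<le> oc (Suc n)" using mono by (simp_all add: strict_mono_less_eq)
    then show ?case using Suc rs_s seg by (simp add: map_upt_split[of "oc 0" "oc n" "oc (Suc n)"])
  qed simp
  moreover have "oc 0 \<le> oc n" for n using mono by (simp add: strict_mono_less_eq)
  ultimately have "derived u v s" unfolding derived_def Let_def by auto
  then show thesis using fp by (rule that)
qed

lemma derived_by_shift:
  assumes preceded: "\<And>i. occurs_at u v i \<Longrightarrow> 0 < i \<and> u (i - 1) = c"
    and "derived_by u (c # v) g"
  shows "derived_by u v g"
proof -
  obtain oc R s where enum: "enumerates_occurrences u (c # v) oc"
    and seg: "\<And>k. map u [oc k..<oc (Suc k)] = R (s k)" and "R 0 \<noteq> R 1"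
    and rest: "fixed_point g s" "0 \<in> range s" "1 \<in> range s"
    using assms(2) unfolding derived_by_def by blast
  have mono: "strict_mono oc" and occ: "\<And>i. occurs_at u (c # v) i \<longleftrightarrow> i \<in> range oc"
    using enum unfolding enumerates_occurrences_def by auto
  have lt: "oc k < oc (Suc k)" for k using mono by (simp add: strict_mono_Suc_iff)
  have "occurs_at u v i \<longleftrightarrow> i \<in> range (Suc \<circ> oc)" for i
  proof
    assume "occurs_at u v i"
    then have "occurs_at u (c # v) (i - 1)" and "i = Suc (i - 1)"
      using preceded by (auto simp: occurs_at_Cons)
    then show "i \<in> range (Suc \<circ> oc)" using occ by (metis comp_apply rangeE rangeI)
  qed (use occ occurs_at_Cons in auto)
  then have enum': "enumerates_occurrences u v (Suc \<circ> oc)"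
    using mono by (auto simp: enumerates_occurrences_def strict_mono_def)
  have hd_R: "R (s k) = c # tl (R (s k))" for k
  proof -
    have "R (s k) = u (oc k) # map u [Suc (oc k)..<oc (Suc k)]"
      using seg[of k] lt[of k] by (simp add: upt_conv_Cons)
    then show ?thesis using occ[of "oc k"] by (simp add: occurs_at_Cons)
  qed
  have "map u [Suc (oc k)..<Suc (oc (Suc k))] = tl (R (s k)) @ [c]" for k
  proof -
    have "map u [Suc (oc k)..<Suc (oc (Suc k))] = tl (map u [oc k..<Suc (oc (Suc k))])"
      using lt[of k] by (simp add: upt_conv_Cons del: upt_Suc)
    also have "\<dots> = tl (R (s k) @ [c])"
      using seg[of k] lt[of k] occ[of "oc (Suc k)"] by (simp add: occurs_at_Cons)
    finally show ?thesis using hd_R[of k] by (metis tl_append2 list.distinct(1))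
  qed
  moreover have "tl (R 0) @ [c] \<noteq> tl (R 1) @ [c]"
    using \<open>R 0 \<noteq> R 1\<close> hd_R rest(2,3) by (metis butlast_snoc rangeE)
  ultimately show ?thesis unfolding derived_by_def using enum' rest
    by (intro exI[of _ "Suc \<circ> oc"] exI[of _ "\<lambda>j. tl (R j) @ [c]"] exI[of _ s]) simp
qed

section \<open>Desubstitution by \<open>\<phi>\<^sub>b\<close> and \<open>\<phi>\<^sub>\<beta>\<close>\<close>

text \<open>Preimage of v under the morphism a \<mapsto> a, b \<mapsto> a b, read block by block from a block start:
  a letter a of v begins the block a or a b according to the next letter, so the last block start
  of v contributes nothing.\<close>
fun desubst :: "nat \<Rightarrow> nat list \<Rightarrow> nat list" where
  "desubst a [] = []"
| "desubst a [c] = []"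
| "desubst a (c # d # v) = (if d = a then a # desubst a (d # v) else d # desubst a v)"

lemma length_desubst_less: "v \<noteq> [] \<Longrightarrow> length (desubst a v) < length v"
proof (induction a v rule: desubst.induct)
  case (3 a c d v)
  then show ?case by (cases v) auto
qed simp_all

text \<open>For a = 0 the morphism h is \<open>\<phi>\<^sub>b\<close>, for a = 1 it is \<open>\<phi>\<^sub>\<beta>\<close>.\<close>
locale elementary_image =
  fixes h :: morph and a :: nat and y :: "nat \<Rightarrow> nat"
  assumes a_binary: "a < 2"
    and h_letter: "\<And>c. c < 2 \<Longrightarrow> h c = (if c = a then [a] else [a, 1 - a])"
    and nonerasing_h: "nonerasing h"
    and y_binary: "\<And>i. y i < 2"
begin

abbreviation u :: "nat \<Rightarrow> nat" where
  "u \<equiv> morph_image h y"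

definition start :: "nat \<Rightarrow> nat" where
  "start j = length (ext h (map y [0..<j]))"

lemma h_y: "h (y j) = a # (if y j = a then [] else [y j])"
  using h_letter[OF y_binary] y_binary[of j] a_binary by auto

lemma start_0 [simp]: "start 0 = 0"
  by (simp add: start_def)

lemma start_Suc: "start (Suc j) = (if y j = a then Suc (start j) else Suc (Suc (start j)))"
  using h_y[of j] by (simp add: start_def)

lemma strict_mono_start: "strict_mono start"
  unfolding strict_mono_Suc_iff by (simp add: start_Suc)

lemma segment_u: "j \<le> j' \<Longrightarrow> map u [start j..<start j'] = ext h (map y [j..<j'])"
proof -
  assume "j \<le> j'"
  then have "start j \<le> start j'" using strict_mono_start by (simp add: strict_mono_less_eq)
  moreover have "map u [0..<start i] = ext h (map y [0..<i])" for i
    unfolding start_def by (rule morph_image_prefix[OF nonerasing_h])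
  ultimately show ?thesis using \<open>j \<le> j'\<close>
    by (metis map_upt_split[of 0 "start j" "start j'"] map_upt_split[of 0 j j'] ext_append
        same_append_eq zero_le)
qed

lemma u_start: "u (start j) = a"
  using segment_u[of j "Suc j"] h_y[of j] start_Suc[of j]
  by (auto simp: upt_conv_Cons split: if_splits)

lemma u_Suc_start: "u (Suc (start j)) = y j"
proof (cases "y j = a")
  case True
  then show ?thesis using u_start[of "Suc j"] by (simp add: start_Suc)
next
  case False
  then show ?thesis using segment_u[of j "Suc j"] h_y[of j] by (simp add: start_Suc)
qed

lemma start_or_Suc_start: "(\<exists>j. i = start j) \<or> (\<exists>j. i = Suc (start j) \<and> y j \<noteq> a)"
proof (induction i)
  case 0
  then show ?case by (metis start_0)
next
  case (Suc i)
  then show ?case by (metis start_Suc)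
qed

lemma u_eq_a_iff: "u i = a \<longleftrightarrow> (\<exists>j. i = start j)"
  using start_or_Suc_start[of i] u_start u_Suc_start by auto

lemma u_neq_a: "u i \<noteq> a \<Longrightarrow> 0 < i \<and> u (i - 1) = a"
  using start_or_Suc_start[of i] u_start by auto

lemma occurs_at_start_Cons_Cons:
  "occurs_at u (c # d # v) (start j) \<longleftrightarrow> c = a \<and> y j = d \<and> occurs_at u v (Suc (Suc (start j)))"
  by (auto simp: occurs_at_Cons u_start u_Suc_start)

text \<open>The occurrence at a block start is needed: v = a b b never occurs there, although
  desubst a v = b does occur in y.\<close>
lemma occurs_at_start_iff:
  assumes "occurs_at u v (start j0)"
  shows "occurs_at u v (start j) \<longleftrightarrow> occurs_at y (desubst a v) j"
  using assms
proof (induction v arbitrary: j0 j rule: induct_list012)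
  case (2 c)
  then show ?case by (simp add: occurs_at_Cons u_start)
next
  case (3 c d v)
  have c: "c = a" and d: "y j0 = d" and v: "occurs_at u v (Suc (Suc (start j0)))"
    using "3.prems" by (simp_all add: occurs_at_start_Cons_Cons)
  show ?case
  proof (cases "d = a")
    case True
    have step: "occurs_at u v (Suc (Suc (start i))) \<longleftrightarrow> occurs_at u (a # v) (start (Suc i))"
      if "y i = a" for i
      using that by (simp add: occurs_at_Cons start_Suc u_Suc_start)
    have "occurs_at u (c # d # v) (start j) \<longleftrightarrow> y j = a \<and> occurs_at u (a # v) (start (Suc j))"
      using c True step by (auto simp: occurs_at_start_Cons_Cons)
    also have "\<dots> \<longleftrightarrow> y j = a \<and> occurs_at y (desubst a (a # v)) (Suc j)"
      using "3.IH"(2)[of "Suc j0" "Suc j"] step[of j0] d v True by simp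
    also have "\<dots> \<longleftrightarrow> occurs_at y (desubst a (c # d # v)) j"
      using True by (simp add: occurs_at_Cons)
    finally show ?thesis .
  next
    case False
    have step: "start (Suc i) = Suc (Suc (start i))" if "y i = d" for i
      using that False by (simp add: start_Suc)
    have "occurs_at u (c # d # v) (start j) \<longleftrightarrow> y j = d \<and> occurs_at u v (start (Suc j))"
      using c step by (auto simp: occurs_at_start_Cons_Cons)
    also have "\<dots> \<longleftrightarrow> y j = d \<and> occurs_at y (desubst a v) (Suc j)"
      using "3.IH"(1)[of "Suc j0" "Suc j"] step[of j0] d v by simp
    also have "\<dots> \<longleftrightarrow> occurs_at y (desubst a (c # d # v)) j"
      using False by (simp add: occurs_at_Cons)
    finally show ?thesis .
  qed
qed simp

lemma occurs_at_iff_desubst: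
  assumes "factor v u" and "v \<noteq> []" and "hd v = a"
  shows "occurs_at u v i \<longleftrightarrow> (\<exists>j. i = start j \<and> occurs_at y (desubst a v) j)"
proof -
  obtain i0 where i0: "occurs_at u v i0" using assms(1) unfolding factor_def by blast
  have at_start: "\<exists>j. i = start j" if "occurs_at u v i" for i
    using occurs_at_hd[OF that assms(2)] assms(3) u_eq_a_iff by simp
  obtain j0 where "occurs_at u v (start j0)" using i0 at_start by blast
  then show ?thesis using occurs_at_start_iff at_start by blast
qed

lemma ext_h_injective:
  assumes "\<forall>c\<in>set z. c < 2" and "\<forall>c\<in>set z'. c < 2" and "ext h z = ext h z'"
  shows "z = z'"
  using assms
proof (induction z arbitrary: z' rule: rev_induct)
  case Nil
  then show ?case using nonerasing_h by (cases z') (simp_all add: nonerasing_def)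
next
  case (snoc c z)
  have last_h: "last (ext h (x @ [e])) = e" if "e < 2" for x e
  proof -
    have "e = a \<or> e = 1 - a" using that a_binary by arith
    then show ?thesis using h_letter[OF that] by auto
  qed
  have "z' \<noteq> []" using snoc.prems(3) nonerasing_h by (auto simp: nonerasing_def)
  then obtain z'' c' where z': "z' = z'' @ [c']" by (metis rev_exhaust)
  have "c < 2" and "c' < 2" using snoc.prems(1,2) z' by simp_all
  then have "c = c'" using last_h[of c z] last_h[of c' z''] snoc.prems(3) z' by simp
  moreover have "ext h z = ext h z''" using snoc.prems(3) z' \<open>c = c'\<close> by simp
  moreover have "z = z''" using snoc.IH[of z''] snoc.prems(1,2) z' \<open>ext h z = ext h z''\<close> by simp
  ultimately show ?case using z' by simp
qed

lemma derived_by_desubst: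
  assumes "factor v u" and "v \<noteq> []" and "hd v = a" and "derived_by y (desubst a v) g"
  shows "derived_by u v g"
proof -
  obtain oc R s where enum: "enumerates_occurrences y (desubst a v) oc"
    and seg: "\<And>k. map y [oc k..<oc (Suc k)] = R (s k)" and "R 0 \<noteq> R 1"
    and rest: "fixed_point g s" "0 \<in> range s" "1 \<in> range s"
    using assms(4) unfolding derived_by_def by blast
  have mono: "strict_mono oc" using enum by (simp add: enumerates_occurrences_def)
  have "occurs_at y (desubst a v) j \<longleftrightarrow> j \<in> range oc" for j
    using enum by (auto simp: enumerates_occurrences_def)
  then have "occurs_at u v i \<longleftrightarrow> i \<in> range (start \<circ> oc)" for i
    using occurs_at_iff_desubst[OF assms(1-3)] by auto
  then have "enumerates_occurrences u v (start \<circ> oc)"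
    using strict_mono_start mono by (auto simp: enumerates_occurrences_def strict_mono_def)
  moreover have "map u [(start \<circ> oc) k..<(start \<circ> oc) (Suc k)] = ext h (R (s k))" for k
    using segment_u[of "oc k" "oc (Suc k)"] seg[of k] mono by (simp add: strict_mono_less_eq)
  moreover have "ext h (R 0) \<noteq> ext h (R 1)"
  proof
    assume "ext h (R 0) = ext h (R 1)"
    moreover have "\<forall>c\<in>set (R (s k)). c < 2" for k
      using seg[of k] y_binary by (metis ex_map_conv)
    ultimately show False
      using \<open>R 0 \<noteq> R 1\<close> ext_h_injective rest(2,3) by (metis rangeE)
  qed
  ultimately show ?thesis unfolding derived_by_def using rest
    by (intro exI[of _ "start \<circ> oc"] exI[of _ "\<lambda>j. ext h (R j)"] exI[of _ s]) simp
qed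

text \<open>The occurrences of v in u correspond to those of its ancestor in y.  A factor not starting
  with a is always preceded by a, so it is first extended to the left.\<close>
definition ancestor :: "nat list \<Rightarrow> nat list" where
  "ancestor v = desubst a (if hd v = a then v else a # v)"

lemma ancestor_letter [simp]: "ancestor [a] = []" "c \<noteq> a \<Longrightarrow> ancestor [c] = [c]"
  by (simp_all add: ancestor_def)

lemma length_ancestor_less:
  assumes "Suc 0 < length v"
  shows "length (ancestor v) < length v"
proof -
  obtain b d w where v: "v = b # d # w"
    using assms by (cases v; cases "tl v") auto
  then show ?thesis
    using length_desubst_less[of v a] length_desubst_less[of "d # w" a]
    by (simp add: ancestor_def)
qed

lemma occurs_at_preceded_by_a:
  assumes "occurs_at u v i" and "v \<noteq> []" and "hd v \<noteq> a"
  shows "0 < i \<and> u (i - 1) = a"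
  using u_neq_a occurs_at_hd[OF assms(1,2)] assms(3) by simp

lemma factor_a_Cons:
  assumes "factor v u" and "v \<noteq> []" and "hd v \<noteq> a"
  shows "factor (a # v) u"
proof -
  obtain i where i: "occurs_at u v i" using assms(1) unfolding factor_def by blast
  then have "0 < i" and "u (i - 1) = a" using occurs_at_preceded_by_a assms(2,3) by simp_all
  then have "occurs_at u (a # v) (i - 1)" using i by (simp add: occurs_at_Cons)
  then show ?thesis unfolding factor_def by blast
qed

lemma factor_ancestor:
  assumes "factor v u" and "v \<noteq> []"
  shows "factor (ancestor v) y"
proof -
  define v' where "v' = (if hd v = a then v else a # v)"
  have "factor v' u" and "v' \<noteq> []" and "hd v' = a"
    using assms factor_a_Cons by (simp_all add: v'_def)
  then obtain i where "occurs_at u v' i" unfolding factor_def by blast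
  then show ?thesis
    using occurs_at_iff_desubst[OF \<open>factor v' u\<close> \<open>v' \<noteq> []\<close> \<open>hd v' = a\<close>]
    unfolding ancestor_def factor_def v'_def[symmetric] by blast
qed

lemma derived_by_ancestor:
  assumes "factor v u" and "v \<noteq> []" and "derived_by y (ancestor v) g"
  shows "derived_by u v g"
proof (cases "hd v = a")
  case True
  then show ?thesis using derived_by_desubst assms by (simp add: ancestor_def)
next
  case False
  have "derived_by u (a # v) g"
    using derived_by_desubst[of "a # v"] factor_a_Cons[OF assms(1,2) False] assms(3) False
    by (simp add: ancestor_def)
  then show ?thesis
    using derived_by_shift occurs_at_preceded_by_a[OF _ assms(2) False] by blast
qed

end

section \<open>The rotations of w\<close>

definition head_letter :: "gen \<Rightarrow> nat" where
  "head_letter g = (if g = Gb then 0 else 1)"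

lemma head_letter_binary: "head_letter g < 2"
  by (simp add: head_letter_def)

lemma head_letter_mem_gen_morph: "g \<in> {Gb, Gbeta} \<Longrightarrow> head_letter g \<in> set (gen_morph g c)"
  by (auto simp: head_letter_def)

lemma letter_mem_gen_morph: "c < 2 \<Longrightarrow> c \<in> set (gen_morph g c)"
  by (cases g) (auto simp: less_2_cases_iff)

lemma gen_morph_binary: "\<forall>x\<in>set (gen_morph g c). x < 2"
  by (cases g) auto

lemma phi_binary: "c < 2 \<Longrightarrow> \<forall>x\<in>set (phi w c). x < 2"
proof (induction w arbitrary: c)
  case Nil
  then show ?case by (simp add: mid_def)
next
  case (Cons g w)
  then show ?case using gen_morph_binary by (simp add: mcomp_def set_ext)
qed

lemma elementary_image_gen_morph:
  assumes "g \<in> {Gb, Gbeta}" and "\<And>i. y i < 2"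
  shows "elementary_image (gen_morph g) (head_letter g) y"
  using assms nonerasing_gen_morph
  by unfold_locales (auto simp: head_letter_def less_2_cases_iff)

lemma fixed_point_desubst:
  assumes "g \<in> {Gb, Gbeta}" and "fixed_point (phi (g # w)) u"
  obtains y where "elementary_image (gen_morph g) (head_letter g) y"
    and "u = morph_image (gen_morph g) y" and "fixed_point (phi (w @ [g])) y"
proof
  define y where "y = morph_image (phi w) u"
  have u: "\<And>i. u i < 2" and "morph_image (phi (g # w)) u = u"
    using assms(2) fixed_point_iff_morph_image[OF nonerasing_phi] by blast+
  then show u_eq: "u = morph_image (gen_morph g) y"
    by (simp add: y_def morph_image_mcomp nonerasing_gen_morph nonerasing_phi)
  have y: "\<And>i. y i < 2"
    unfolding y_def by (rule morph_image_binary[OF nonerasing_phi phi_binary u])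
  then show "elementary_image (gen_morph g) (head_letter g) y"
    by (rule elementary_image_gen_morph[OF assms(1)])
  have "morph_image (phi (w @ [g])) y = y"
    using u_eq by (simp add: y_def phi_snoc morph_image_mcomp nonerasing_gen_morph nonerasing_phi)
  then show "fixed_point (phi (w @ [g])) y"
    using y fixed_point_iff_morph_image[OF nonerasing_phi] by blast
qed

lemma fixed_point_rotate_desubst:
  assumes "set w = {Gb, Gbeta}" and "fixed_point (phi (rotate k w)) u"
  obtains y where "elementary_image (gen_morph (hd (rotate k w))) (head_letter (hd (rotate k w))) y"
    and "u = morph_image (gen_morph (hd (rotate k w))) y"
    and "fixed_point (phi (rotate (Suc k) w)) y"
proof -
  let ?g = "hd (rotate k w)" and ?z = "tl (rotate k w)"
  have "rotate k w \<noteq> []" using assms(1) by (cases w) simp_all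
  then have "rotate k w = ?g # ?z" and "rotate (Suc k) w = ?z @ [?g]"
    by (simp_all add: rotate1_hd_tl)
  moreover have "?g \<in> {Gb, Gbeta}" using \<open>rotate k w \<noteq> []\<close> assms(1) by (metis hd_in_set set_rotate)
  ultimately show ?thesis using fixed_point_desubst assms(2) that by metis
qed

lemma head_letter_mem_phi:
  assumes "g \<in> set z" and "g \<in> {Gb, Gbeta}"
  shows "head_letter g \<in> set (phi z c)"
  using assms(1)
proof (induction z arbitrary: c)
  case (Cons g' z)
  show ?case
  proof (cases "g' = g")
    case True
    obtain d where "d \<in> set (phi z c)"
      using nonerasing_phi[of z] by (metis list.set_intros(1) neq_Nil_conv nonerasing_def)
    then show ?thesis using True head_letter_mem_gen_morph[OF assms(2)]
      by (auto simp: mcomp_def set_ext)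
  next
    case False
    then have "head_letter g \<in> set (phi z c)" using Cons by simp
    then show ?thesis using letter_mem_gen_morph[OF head_letter_binary]
      by (auto simp: mcomp_def set_ext)
  qed
qed simp

lemma binary_letters_mem_phi: "set z = {Gb, Gbeta} \<Longrightarrow> {0, 1} \<subseteq> set (phi z c)"
  using head_letter_mem_phi[of Gb z c] head_letter_mem_phi[of Gbeta z c]
  by (simp add: head_letter_def)

lemma derived_by_Nil:
  assumes "set z = {Gb, Gbeta}" and "fixed_point (phi z) u"
  shows "derived_by u [] (phi z)"
proof -
  have "\<exists>L. ext (phi z) (map u [0..<1]) = map u [0..<L]"
    using assms(2) unfolding fixed_point_def by blast
  then obtain L where "phi z (u 0) = map u [0..<L]" by auto
  then have "set (phi z (u 0)) \<subseteq> range u" by auto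
  then have "{0, 1} \<subseteq> range u" using binary_letters_mem_phi[OF assms(1)] by blast
  moreover have "enumerates_occurrences u [] id"
    by (simp add: enumerates_occurrences_def strict_mono_def)
  ultimately show ?thesis unfolding derived_by_def using assms(2)
    by (intro exI[of _ id] exI[of _ "\<lambda>c. [c]"] exI[of _ u]) simp
qed

lemma derived_by_head_letter:
  assumes "set w = {Gb, Gbeta}" and "fixed_point (phi (rotate k w)) u" and "factor [c] u"
    and "head_letter (hd (rotate k w)) = c"
  shows "derived_by u [c] (phi (rotate (Suc k) w))"
proof -
  let ?g = "hd (rotate k w)"
  obtain y where "elementary_image (gen_morph ?g) (head_letter ?g) y"
    and u_eq: "u = morph_image (gen_morph ?g) y"
    and fy: "fixed_point (phi (rotate (Suc k) w)) y"
    using fixed_point_rotate_desubst assms(1,2) by blast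
  then interpret elementary_image "gen_morph ?g" c y using assms(4) by simp
  have "derived_by y (ancestor [c]) (phi (rotate (Suc k) w))"
    using derived_by_Nil[of "rotate (Suc k) w"] fy assms(1) by simp
  moreover have "factor [c] (morph_image (gen_morph ?g) y)"
    using assms(3) u_eq by simp
  ultimately show ?thesis using derived_by_ancestor u_eq by simp
qed

lemma derived_by_other_letter:
  assumes "set w = {Gb, Gbeta}" and "fixed_point (phi (rotate k w)) u" and "factor [c] u"
    and "head_letter (hd (rotate k w)) \<noteq> c"
    and IH: "\<And>y. fixed_point (phi (rotate (Suc k) w)) y \<Longrightarrow> factor [c] y \<Longrightarrow>
      \<exists>k'. derived_by y [c] (phi (rotate k' w))"
  shows "\<exists>k'. derived_by u [c] (phi (rotate k' w))"
proof -
  let ?g = "hd (rotate k w)"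
  obtain y where E: "elementary_image (gen_morph ?g) (head_letter ?g) y"
    and u_eq: "u = morph_image (gen_morph ?g) y"
    and fy: "fixed_point (phi (rotate (Suc k) w)) y"
    using fixed_point_rotate_desubst assms(1,2) by blast
  interpret elementary_image "gen_morph ?g" "head_letter ?g" y by (rule E)
  have ancestor: "ancestor [c] = [c]" using assms(4) by simp
  have fc: "factor [c] (morph_image (gen_morph ?g) y)"
    using assms(3) u_eq by simp
  then have "factor [c] y" using factor_ancestor[OF fc] ancestor by simp
  then obtain k' where "derived_by y [c] (phi (rotate k' w))" using IH fy by blast
  then have "derived_by u [c] (phi (rotate k' w))"
    using derived_by_ancestor[OF fc] ancestor u_eq by simp
  then show ?thesis by blast
qed

lemma hd_rotate_eventually:
  assumes "g \<in> set w"
  obtains n where "k \<le> n" and "hd (rotate n w) = g"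
proof -
  obtain i where i: "i < length w" "w ! i = g" using assms by (metis in_set_conv_nth)
  have "k \<le> k * length w + i" using i by (simp add: trans_le_add1)
  moreover have "hd (rotate (k * length w + i) w) = g"
    using i hd_rotate_conv_nth[of w "k * length w + i"] by fastforce
  ultimately show ?thesis by (rule that)
qed

lemma derived_by_letter:
  assumes both: "set w = {Gb, Gbeta}" and "fixed_point (phi (rotate k w)) u" and "factor [c] u"
  shows "\<exists>k'. derived_by u [c] (phi (rotate k' w))"
proof -
  have "c < 2" using factor_binary assms(2,3) by simp
  then have "head_letter (if c = 0 then Gb else Gbeta) = c" by (simp add: head_letter_def)
  moreover have "(if c = 0 then Gb else Gbeta) \<in> set w" using both by simp
  ultimately obtain n where "k \<le> n" and hn: "head_letter (hd (rotate n w)) = c"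
    using hd_rotate_eventually by metis
  have "\<forall>u. fixed_point (phi (rotate k w)) u \<longrightarrow> factor [c] u \<longrightarrow>
      (\<exists>k'. derived_by u [c] (phi (rotate k' w)))"
    using \<open>k \<le> n\<close>
  proof (induction k rule: inc_induct)
    case base
    then show ?case using derived_by_head_letter[OF both _ _ hn] by blast
  next
    case (step k)
    show ?case
    proof (intro allI impI)
      fix u
      assume "fixed_point (phi (rotate k w)) u" and "factor [c] u"
      then show "\<exists>k'. derived_by u [c] (phi (rotate k' w))"
        using derived_by_head_letter[OF both] derived_by_other_letter[OF both] step.IH
        by (cases "head_letter (hd (rotate k w)) = c") blast+
    qed
  qed
  then show ?thesis using assms(2,3) by blast
qed

lemma derived_by_rotation:
  assumes both: "set w = {Gb, Gbeta}"
    and "fixed_point (phi (rotate k w)) u" and "factor v u"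
  shows "\<exists>k'. derived_by u v (phi (rotate k' w))"
  using assms(2,3)
proof (induction "length v" arbitrary: v k u rule: less_induct)
  case less
  consider "v = []" | c where "v = [c]" | "Suc 0 < length v"
    by (cases v; cases "tl v") auto
  then show ?case
  proof cases
    case 1
    then show ?thesis using derived_by_Nil[OF _ less.prems(1)] both by auto
  next
    case 2
    then show ?thesis using derived_by_letter[OF both less.prems(1)] less.prems(2) by simp
  next
    case 3
    let ?g = "hd (rotate k w)"
    obtain y where E: "elementary_image (gen_morph ?g) (head_letter ?g) y"
      and u: "u = morph_image (gen_morph ?g) y"
      and fy: "fixed_point (phi (rotate (Suc k) w)) y"
      using fixed_point_rotate_desubst both less.prems(1) by blast
    interpret elementary_image "gen_morph ?g" "head_letter ?g" y by (rule E)
    have "v \<noteq> []" using 3 by auto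
    have fv: "factor v (morph_image (gen_morph ?g) y)" using less.prems(2) u by simp
    then have "factor (ancestor v) y" using factor_ancestor \<open>v \<noteq> []\<close> by blast
    moreover have "length (ancestor v) < length v" using length_ancestor_less 3 by blast
    ultimately obtain k' where "derived_by y (ancestor v) (phi (rotate k' w))"
      using less.hyps fy by blast
    then show ?thesis using derived_by_ancestor[OF fv \<open>v \<noteq> []\<close>] u by auto
  qed
qed

lemma mpow_fixes_letter: "f c = [c] \<Longrightarrow> mpow f n c = [c]"
  by (induction n) (simp_all add: mcomp_def mid_def)

lemma phi_fixes_head_letter:
  assumes "set z \<subseteq> {g}" and "g \<in> {Gb, Gbeta}"
  shows "phi z (head_letter g) = [head_letter g]"
  using assms(1)
proof (induction z)
  case Nil
  then show ?case by (simp add: mid_def)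
next
  case (Cons g' z)
  then show ?case using assms(2) by (auto simp: mcomp_def head_letter_def)
qed

lemma not_primitive_single_generator:
  assumes "set z \<subseteq> {g}" and "g \<in> {Gb, Gbeta}"
  shows "\<not> primitive (phi z)"
proof
  assume "primitive (phi z)"
  then obtain n where n: "\<forall>a<2. \<forall>b<2. b \<in> set (mpow (phi z) n a)"
    unfolding primitive_def by blast
  have "mpow (phi z) n (head_letter g) = [head_letter g]"
    using mpow_fixes_letter phi_fixes_head_letter[OF assms] by blast
  moreover have "1 - head_letter g \<in> set (mpow (phi z) n (head_letter g))"
    using n head_letter_binary[of g] by simp
  ultimately have "1 - head_letter g = head_letter g" by simp
  then show False by (simp add: head_letter_def split: if_splits)
qed

lemma primitive_imp_both_generators:
  assumes "set w \<subseteq> {Gb, Gbeta}" and "primitive (phi w)"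
  shows "set w = {Gb, Gbeta}"
proof -
  have "Gb \<in> set w"
    using not_primitive_single_generator[of w Gbeta] assms by blast
  moreover have "Gbeta \<in> set w"
    using not_primitive_single_generator[of w Gb] assms by blast
  ultimately show ?thesis using assms(1) by blast
qed

lemma primitive_phi: "set z = {Gb, Gbeta} \<Longrightarrow> primitive (phi z)"
  unfolding primitive_def using binary_letters_mem_phi[of z]
  by (intro exI[of _ 1]) (simp add: less_2_cases_iff)

lemma mpow_Cons_length:
  assumes "nonerasing f" and "f c = c # x" and "x \<noteq> []"
  shows "\<exists>r. mpow f n c = c # r \<and> n \<le> length r"
proof (induction n)
  case 0
  then show ?case by (simp add: mid_def)
next
  case (Suc n)
  then obtain r where r: "mpow f n c = c # r" "n \<le> length r" by blast
  then have "mpow f (Suc n) c = c # (x @ ext f r)" using assms(2) by (simp add: mcomp_def)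
  moreover have "length r \<le> length (ext f r)" using length_le_length_ext[OF assms(1)] .
  ultimately show ?case using r(2) assms(3) by (cases x) auto
qed

lemma substitution_phi:
  assumes "set z = {Gb, Gbeta}"
  shows "substitution (phi z)"
proof -
  obtain g z' where z: "z = g # z'" using assms by (cases z) simp_all
  define c where "c = head_letter g"
  have "g \<in> set z" by (simp add: z)
  then have "g \<in> {Gb, Gbeta}" using assms by blast
  then have g: "gen_morph g e = c # tl (gen_morph g e)" for e
    by (cases "g = Gb") (simp_all add: c_def head_letter_def)
  have "phi z' c \<noteq> []" using nonerasing_phi by (simp add: nonerasing_def)
  then have "phi z c = ext (gen_morph g) (hd (phi z' c) # tl (phi z' c))"
    by (simp add: z mcomp_def)
  also have "\<dots> = gen_morph g (hd (phi z' c)) @ ext (gen_morph g) (tl (phi z' c))"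
    by (simp only: ext_Cons)
  also have "\<dots> = c # (tl (gen_morph g (hd (phi z' c))) @ ext (gen_morph g) (tl (phi z' c)))"
    by (subst g) simp
  finally obtain x where x: "phi z c = c # x" by blast
  have "x \<noteq> []"
  proof
    assume "x = []"
    then have "set (phi z c) = {c}" using x by simp
    then show False using binary_letters_mem_phi[OF assms, of c] by auto
  qed
  have "n \<le> length (mpow (phi z) n c)" for n
  proof -
    obtain r where "mpow (phi z) n c = c # r" and "n \<le> length r"
      using mpow_Cons_length[OF nonerasing_phi x \<open>x \<noteq> []\<close>] by blast
    then show ?thesis by simp
  qed
  then have "filterlim (\<lambda>n. length (mpow (phi z) n c)) at_top sequentially"
    by (intro filterlim_at_top_mono[OF filterlim_ident]) simp
  moreover have "c < 2" by (simp add: c_def head_letter_binary)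
  ultimately show ?thesis unfolding substitution_def using x \<open>x \<noteq> []\<close> by blast
qed

lemma finite_rotations: "finite {phi (rotate k w) | k. True}"
proof -
  have "range (\<lambda>k. rotate k w) \<subseteq> {xs. set xs \<subseteq> set w \<and> length xs = length w}"
    by auto
  then have "finite (range (\<lambda>k. rotate k w))"
    by (rule finite_subset) (simp add: finite_lists_length_eq)
  moreover have "{phi (rotate k w) | k. True} = phi ` range (\<lambda>k. rotate k w)"
    by auto
  ultimately show ?thesis by simp
qed

theorem claim25:
  fixes w :: "gen list"
  assumes "set w \<subseteq> {Gb, Gbeta}"
    and "primitive (phi w)"
  shows "closed_under_derivation {phi (rotate k w) | k. True}"
proof -
  have both: "set w = {Gb, Gbeta}"
    using primitive_imp_both_generators assms by blast
  have "primitive f \<and> substitution f" if f: "f \<in> {phi (rotate k w) | k. True}" for f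
  proof -
    obtain k where "f = phi (rotate k w)" using f by blast
    moreover have "set (rotate k w) = {Gb, Gbeta}" using both by simp
    ultimately show ?thesis using primitive_phi substitution_phi by simp
  qed
  moreover have "\<exists>s. derived u v s \<and> (\<exists>g\<in>{phi (rotate k w) | k. True}. fixed_point g s)"
    if f: "f \<in> {phi (rotate k w) | k. True}" and fp: "fixed_point f u" and "factor v u" for f u v
  proof -
    obtain k where "f = phi (rotate k w)" using f by blast
    then obtain k' where "derived_by u v (phi (rotate k' w))"
      using derived_by_rotation[OF both] fp \<open>factor v u\<close> by blast
    then obtain s where "derived u v s" and "fixed_point (phi (rotate k' w)) s"
      by (rule derived_by_imp_derived)
    then show ?thesis by blast
  qed
  ultimately show ?thesis
    unfolding closed_under_derivation_def using finite_rotations by blast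
qed

end
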